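(* Let $\mathbb{G}$ be a $b$-bounded concurrent game system and $\pi$ a strategy profile given by probabilistic transducers. If $\pi$ is not a subgame perfect equilibrium in $\mathbb{G}$, then there exist an agent $i$, a state $v^*=\langle v,s,n\rangle$ of $\mathbb{G}\times\pi$ with $i\in P(v)$, and an action $a\in A_i$ such that (1) $v^*\in R$ (the set of relevant history-reachable states for agent $i$), and (2) in the Markov chain $\mathbb{G}\times\pi'$ obtained from $\mathbb{G}\times\pi$ by changing only the outgoing transition probabilities of $v^*$, namely by replacing the distribution $O_i(s^i,v)$ of agent $i$ with the point mass on $a$ (all other agents' outputs unchanged), the probability of reaching $T=\{\langle v',s',n'\rangle : v'\in G_i\}$ from $v^*$ is strictly larger than in $\mathbb{G}\times\pi$.
   Context: Fix a constant $b\ge 1$. A $b$-bounded concurrent game system is a tuple $\mathbb{G}=\langle V,v_0,\Omega,A,P,\delta,\mathbb{L},G,F\rangle$ where: $V$ is a finite set of states with initial state $v_0$; $\Omega=\{1,\dots,k\}$ is the set of agents; $A_i$ is the finite action set of agent $i$, $\Theta_W=\prod_{i\in W}A_i$; $P:V\to 2^\Omega$ with $|P(v)|\le b$; $\delta(v,\theta,v')\in[0,1]$ for $\theta\in\Theta_{P(v)}$ with $\sum_{v'}\delta(v,\theta,v')=1$, all probabilities binary fractions of exactly $\mathbb{L}$ bits; $G_i\subseteq V$ is agent $i$'s reachability goal; $F\in\mathbb{N}$ is a horizon. A play starts at $v_0$; at each state $v$ the agents in $P(v)$ choose actions from their current distributions, and the next state is sampled from $\delta$; the play visits $F$ states in total.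 Agent $i$'s payoff from a play is $1$ if it visits $G_i$ and $0$ otherwise; $p(\pi,i)$ is the expected payoff under profile $\pi$. A strategy of agent $i$ is any function $V^+\to\mathbb{D}(A_i)$; input strategies are given by probabilistic transducers $\langle S_i,s_0^i,V,\gamma^i,O_i\rangle$ (finite $S_i$, deterministic $\gamma^i:S_i\times V\to S_i$, $O_i:S_i\times V\to\mathbb{D}(A_i)$). The product transducer of $\pi$ has states $S=\prod_iS_i$, initial state $s_0$, componentwise transitions $\gamma$, and output $O(s,v)$ = product distribution of $O_j(s^j,v)$, $j\in P(v)$. A Nash equilibrium is a profile $\pi$ such that for every agent $i$ and every strategy $\pi'_i$, replacing $\pi_i$ by $\pi'_i$ does not increase $p(\cdot,i)$. A history is $h\in V^+$ starting at $v_0$, with $|h|\le F$, such that consecutive states $h[j],h[j+1]$ satisfy $\delta(h[j],\theta,h[j+1])>0$ for some $\theta$. The substrategy is $\pi_i|_h(w)=\pi_i(h\cdot w)$; the subgame $\mathbb{G}|_h$ starts at the last state of $h$ with horizon $F-|h|$, and agents whose goal was visited in $h$ get payoff $1$. $\pi$ is a subgame perfect equilibrium iff for every history $h$, $\pi|_h=\langle\pi_1|_h,\dots,\pi_k|_h\rangle$ is a Nash equilibrium in $\mathbb{G}|_h$. The Markov chain $\mathbb{G}\times\pi$ has states $V\times S\times[F]$ and transition probability from $\langle v_1,s_1,n_1\rangle$ to $\langle v_2,s_2,n_2\rangle$ equal to $p_vp_sp_n$, where $p_s=[s_2=\gamma(s_1,v_1)]$, $p_n=[n_2=n_1+1]$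 (no outgoing transitions when $n_1=F$), and $p_v=\sum_\theta\Pr[O(s_1,v_1)=\theta]\,\delta(v_1,\theta,v_2)$. A state $r$ is in $R$ (for agent $i$) iff there is a path $\langle v_0,s_0,1\rangle=x_1,\dots,x_m=r$, $x_j=\langle v'_j,s'_j,n_j\rangle$, with $\gamma(s'_j,v'_j)=s'_{j+1}$, $n_{j+1}=n_j+1$, $\delta(v'_j,\theta,v'_{j+1})>0$ for some $\theta\in\Theta_{P(v'_j)}$, and $v'_j\notin G_i$ for all $j$. *)

theory Defs
  imports "HOL-Probability.Probability_Mass_Function"
begin

text \<open>Agents are the naturals 1..k. A joint action of the agents in W is a
  function theta in PiE W A. States of the game form the finite type 'v (V = UNIV).\<close>

definition jprob :: "nat set \<Rightarrow> (nat \<Rightarrow> 'a pmf) \<Rightarrow> (nat \<Rightarrow> 'a) \<Rightarrow> real" where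
  "jprob W d \<theta> = (\<Prod>j\<in>W. pmf (d j) (\<theta> j))"

definition bounded_cgs ::
  "nat \<Rightarrow> nat \<Rightarrow> (nat \<Rightarrow> 'a set) \<Rightarrow> ('v::finite \<Rightarrow> nat set) \<Rightarrow>
   ('v \<Rightarrow> (nat \<Rightarrow> 'a) \<Rightarrow> 'v \<Rightarrow> real) \<Rightarrow> nat \<Rightarrow> bool" where
  "bounded_cgs b k A P \<delta> L \<longleftrightarrow>
     b \<ge> 1 \<and>
     (\<forall>i\<in>{1..k}. finite (A i)) \<and>
     (\<forall>v. P v \<subseteq> {1..k} \<and> card (P v) \<le> b) \<and>
     (\<forall>v \<theta>. \<theta> \<in> PiE (P v) A \<longrightarrow>
        (\<forall>v'. 0 \<le> \<delta> v \<theta> v' \<and> \<delta> v \<theta> v' \<le> 1 \<and>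
              (\<exists>m::nat. \<delta> v \<theta> v' = real m / 2 ^ L)) \<and>
        (\<Sum>v'\<in>UNIV. \<delta> v \<theta> v') = 1)"

text \<open>Probability that agent i's goal is visited, given current history h and
  n further states still to be visited, under a profile of general strategies
  sigma j :: 'v list => 'a pmf.\<close>

fun reachv :: "('v::finite \<Rightarrow> nat set) \<Rightarrow> (nat \<Rightarrow> 'a set) \<Rightarrow> ('v \<Rightarrow> (nat \<Rightarrow> 'a) \<Rightarrow> 'v \<Rightarrow> real)
   \<Rightarrow> (nat \<Rightarrow> 'v set) \<Rightarrow> (nat \<Rightarrow> 'v list \<Rightarrow> 'a pmf) \<Rightarrow> nat \<Rightarrow> 'v list \<Rightarrow> nat \<Rightarrow> real" where
  "reachv P A \<delta> G \<sigma> i h 0 = (if set h \<inter> G i \<noteq> {} then 1 else 0)"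
| "reachv P A \<delta> G \<sigma> i h (Suc n) = (if set h \<inter> G i \<noteq> {} then 1 else
     (\<Sum>\<theta>\<in>PiE (P (last h)) A. jprob (P (last h)) (\<lambda>j. \<sigma> j h) \<theta> *
        (\<Sum>v'\<in>UNIV. \<delta> (last h) \<theta> v' * reachv P A \<delta> G \<sigma> i (h @ [v']) n)))"

definition is_strategy :: "(nat \<Rightarrow> 'a set) \<Rightarrow> nat \<Rightarrow> ('v list \<Rightarrow> 'a pmf) \<Rightarrow> bool" where
  "is_strategy A i s \<longleftrightarrow> (\<forall>w. set_pmf (s w) \<subseteq> A i)"

definition is_history :: "('v \<Rightarrow> nat set) \<Rightarrow> (nat \<Rightarrow> 'a set) \<Rightarrow> ('v \<Rightarrow> (nat \<Rightarrow> 'a) \<Rightarrow> 'v \<Rightarrow> real)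
   \<Rightarrow> 'v \<Rightarrow> nat \<Rightarrow> 'v list \<Rightarrow> bool" where
  "is_history P A \<delta> v0 F h \<longleftrightarrow> h \<noteq> [] \<and> hd h = v0 \<and> length h \<le> F \<and>
     (\<forall>j. j + 1 < length h \<longrightarrow> (\<exists>\<theta>\<in>PiE (P (h ! j)) A. \<delta> (h ! j) \<theta> (h ! (j + 1)) > 0))"

text \<open>Substrategy: pi_i|_h (w) = pi_i (h . w), where the subgame history w starts
  at the last state of h (which is therefore not repeated).\<close>
definition substrat :: "(nat \<Rightarrow> 'v list \<Rightarrow> 'a pmf) \<Rightarrow> 'v list \<Rightarrow> nat \<Rightarrow> 'v list \<Rightarrow> 'a pmf" where
  "substrat \<sigma> h = (\<lambda>j w. \<sigma> j (butlast h @ w))"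

definition subval :: "('v::finite \<Rightarrow> nat set) \<Rightarrow> (nat \<Rightarrow> 'a set) \<Rightarrow> ('v \<Rightarrow> (nat \<Rightarrow> 'a) \<Rightarrow> 'v \<Rightarrow> real)
   \<Rightarrow> (nat \<Rightarrow> 'v set) \<Rightarrow> nat \<Rightarrow> 'v list \<Rightarrow> (nat \<Rightarrow> 'v list \<Rightarrow> 'a pmf) \<Rightarrow> nat \<Rightarrow> real" where
  "subval P A \<delta> G F h \<tau> i =
     (if set h \<inter> G i \<noteq> {} then 1 else reachv P A \<delta> G \<tau> i [last h] (F - length h))"

definition is_NE_sub :: "nat \<Rightarrow> ('v::finite \<Rightarrow> nat set) \<Rightarrow> (nat \<Rightarrow> 'a set) \<Rightarrow> ('v \<Rightarrow> (nat \<Rightarrow> 'a) \<Rightarrow> 'v \<Rightarrow> real)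
   \<Rightarrow> (nat \<Rightarrow> 'v set) \<Rightarrow> nat \<Rightarrow> 'v list \<Rightarrow> (nat \<Rightarrow> 'v list \<Rightarrow> 'a pmf) \<Rightarrow> bool" where
  "is_NE_sub k P A \<delta> G F h \<tau> \<longleftrightarrow>
     (\<forall>i\<in>{1..k}. \<forall>\<tau>'. is_strategy A i \<tau>' \<longrightarrow>
        subval P A \<delta> G F h (\<tau>(i := \<tau>')) i \<le> subval P A \<delta> G F h \<tau> i)"

definition is_SPE :: "nat \<Rightarrow> ('v::finite \<Rightarrow> nat set) \<Rightarrow> (nat \<Rightarrow> 'a set) \<Rightarrow> ('v \<Rightarrow> (nat \<Rightarrow> 'a) \<Rightarrow> 'v \<Rightarrow> real)
   \<Rightarrow> (nat \<Rightarrow> 'v set) \<Rightarrow> 'v \<Rightarrow> nat \<Rightarrow> (nat \<Rightarrow> 'v list \<Rightarrow> 'a pmf) \<Rightarrow> bool" where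
  "is_SPE k P A \<delta> G v0 F \<sigma> \<longleftrightarrow>
     (\<forall>h. is_history P A \<delta> v0 F h \<longrightarrow> is_NE_sub k P A \<delta> G F h (substrat \<sigma> h))"

definition transducers :: "nat \<Rightarrow> (nat \<Rightarrow> 'a set) \<Rightarrow> (nat \<Rightarrow> 's set) \<Rightarrow> (nat \<Rightarrow> 's)
   \<Rightarrow> (nat \<Rightarrow> 's \<Rightarrow> 'v \<Rightarrow> 's) \<Rightarrow> (nat \<Rightarrow> 's \<Rightarrow> 'v \<Rightarrow> 'a pmf) \<Rightarrow> bool" where
  "transducers k A S s0 \<gamma> Out \<longleftrightarrow>
     (\<forall>i\<in>{1..k}. finite (S i) \<and> s0 i \<in> S i \<and>
        (\<forall>s\<in>S i. \<forall>v. \<gamma> i s v \<in> S i \<and> set_pmf (Out i s v) \<subseteq> A i))"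

text \<open>The strategy computed by a transducer: after reading v_0 .. v_{m-1} it is in
  state s and outputs Out(s, v_m).\<close>
definition tstrat :: "(nat \<Rightarrow> 's) \<Rightarrow> (nat \<Rightarrow> 's \<Rightarrow> 'v \<Rightarrow> 's) \<Rightarrow> (nat \<Rightarrow> 's \<Rightarrow> 'v \<Rightarrow> 'a pmf)
   \<Rightarrow> nat \<Rightarrow> 'v list \<Rightarrow> 'a pmf" where
  "tstrat s0 \<gamma> Out j h = Out j (foldl (\<gamma> j) (s0 j) (butlast h)) (last h)"

definition pgamma :: "nat \<Rightarrow> (nat \<Rightarrow> 's \<Rightarrow> 'v \<Rightarrow> 's) \<Rightarrow> (nat \<Rightarrow> 's) \<Rightarrow> 'v \<Rightarrow> (nat \<Rightarrow> 's)" where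
  "pgamma k \<gamma> s v = restrict (\<lambda>j. \<gamma> j (s j) v) {1..k}"

type_synonym ('v, 's) mcstate = "'v \<times> (nat \<Rightarrow> 's) \<times> nat"

definition mc_states :: "nat \<Rightarrow> (nat \<Rightarrow> 's set) \<Rightarrow> nat \<Rightarrow> ('v, 's) mcstate set" where
  "mc_states k S F = UNIV \<times> PiE {1..k} S \<times> {1..F}"

definition pv :: "('v \<Rightarrow> nat set) \<Rightarrow> (nat \<Rightarrow> 'a set) \<Rightarrow> ('v \<Rightarrow> (nat \<Rightarrow> 'a) \<Rightarrow> 'v \<Rightarrow> real)
   \<Rightarrow> (nat \<Rightarrow> 'a pmf) \<Rightarrow> 'v \<Rightarrow> 'v \<Rightarrow> real" where
  "pv P A \<delta> out v1 v2 = (\<Sum>\<theta>\<in>PiE (P v1) A. jprob (P v1) out \<theta> * \<delta> v1 \<theta> v2)"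

definition gen_trans :: "nat \<Rightarrow> ('v \<Rightarrow> nat set) \<Rightarrow> (nat \<Rightarrow> 'a set) \<Rightarrow> ('v \<Rightarrow> (nat \<Rightarrow> 'a) \<Rightarrow> 'v \<Rightarrow> real)
   \<Rightarrow> (nat \<Rightarrow> 's \<Rightarrow> 'v \<Rightarrow> 's) \<Rightarrow> nat \<Rightarrow> (('v, 's) mcstate \<Rightarrow> nat \<Rightarrow> 'a pmf)
   \<Rightarrow> ('v, 's) mcstate \<Rightarrow> ('v, 's) mcstate \<Rightarrow> real" where
  "gen_trans k P A \<delta> \<gamma> F outf x y =
     (case x of (v1, s1, n1) \<Rightarrow> case y of (v2, s2, n2) \<Rightarrow>
        if n1 = F then 0 else
        pv P A \<delta> (outf x) v1 v2 * (if s2 = pgamma k \<gamma> s1 v1 then 1 else 0)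
          * (if n2 = n1 + 1 then 1 else 0))"

definition out_pi :: "(nat \<Rightarrow> 's \<Rightarrow> 'v \<Rightarrow> 'a pmf) \<Rightarrow> ('v, 's) mcstate \<Rightarrow> nat \<Rightarrow> 'a pmf" where
  "out_pi Out x = (case x of (v, s, n) \<Rightarrow> (\<lambda>j. Out j (s j) v))"

definition out_mod :: "(nat \<Rightarrow> 's \<Rightarrow> 'v \<Rightarrow> 'a pmf) \<Rightarrow> nat \<Rightarrow> 'a \<Rightarrow> ('v, 's) mcstate
   \<Rightarrow> ('v, 's) mcstate \<Rightarrow> nat \<Rightarrow> 'a pmf" where
  "out_mod Out i a xs x = (if x = xs then (out_pi Out x)(i := return_pmf a) else out_pi Out x)"

fun mc_reach :: "'x set \<Rightarrow> ('x \<Rightarrow> 'x \<Rightarrow> real) \<Rightarrow> 'x set \<Rightarrow> nat \<Rightarrow> 'x \<Rightarrow> real" where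
  "mc_reach X M T 0 x = (if x \<in> T then 1 else 0)"
| "mc_reach X M T (Suc n) x = (if x \<in> T then 1 else (\<Sum>y\<in>X. M x y * mc_reach X M T n y))"

text \<open>The chain G x pi has horizon F (the counter strictly increases and there are no
  transitions out of counter value F), so reaching within F steps is reaching at all.\<close>
definition reach_prob :: "nat \<Rightarrow> (nat \<Rightarrow> 's set) \<Rightarrow> nat \<Rightarrow> (('v, 's) mcstate \<Rightarrow> ('v, 's) mcstate \<Rightarrow> real)
   \<Rightarrow> ('v, 's) mcstate set \<Rightarrow> ('v, 's) mcstate \<Rightarrow> real" where
  "reach_prob k S F M T x = mc_reach (mc_states k S F) M T F x"

definition goal_states :: "(nat \<Rightarrow> 'v set) \<Rightarrow> nat \<Rightarrow> ('v, 's) mcstate set" where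
  "goal_states G i = {(v', s', n'). v' \<in> G i}"

inductive_set Rset :: "nat \<Rightarrow> ('v \<Rightarrow> nat set) \<Rightarrow> (nat \<Rightarrow> 'a set) \<Rightarrow> ('v \<Rightarrow> (nat \<Rightarrow> 'a) \<Rightarrow> 'v \<Rightarrow> real)
   \<Rightarrow> (nat \<Rightarrow> 'v set) \<Rightarrow> (nat \<Rightarrow> 's) \<Rightarrow> (nat \<Rightarrow> 's \<Rightarrow> 'v \<Rightarrow> 's) \<Rightarrow> 'v \<Rightarrow> nat \<Rightarrow> ('v, 's) mcstate set"
  for k P A \<delta> G s0 \<gamma> v0 i where
  base: "v0 \<notin> G i \<Longrightarrow> (v0, restrict s0 {1..k}, 1) \<in> Rset k P A \<delta> G s0 \<gamma> v0 i"
| step: "(v, s, n) \<in> Rset k P A \<delta> G s0 \<gamma> v0 i \<Longrightarrow> \<theta> \<in> PiE (P v) A \<Longrightarrow> \<delta> v \<theta> v' > 0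
          \<Longrightarrow> v' \<notin> G i \<Longrightarrow> (v', pgamma k \<gamma> s v, n + 1) \<in> Rset k P A \<delta> G s0 \<gamma> v0 i"

end

theory Submission
  imports Defs
begin

text \<open>This is the one-shot deviation principle for finite-horizon reachability. Suppose no
  relevant state of \<open>\<G> \<times> \<pi>\<close> admits a profitable single-state switch of agent \<open>i\<close> to a pure
  action. The value of the compliant profile in a subgame \<open>\<G>|\<^sub>h\<close> is the reachability
  probability of \<open>\<G> \<times> \<pi>\<close> from the state that \<open>\<pi>\<close> reaches along \<open>h\<close>. By backward induction
  on the remaining horizon, an arbitrary deviation of agent \<open>i\<close> is bounded by that same
  probability: its randomisation at the current state is a convex combination of pure
  actions, each of which gains nothing, and its continuation is bounded by induction.
  Hence \<open>\<pi>|\<^sub>h\<close> is a Nash equilibrium of every subgame.\<close>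

lemma jprob_nonneg: "0 \<le> jprob W d \<theta>"
  unfolding jprob_def by (intro prod_nonneg) auto

lemma jprob_cong: "(\<And>j. j \<in> W \<Longrightarrow> d j = d' j) \<Longrightarrow> jprob W d \<theta> = jprob W d' \<theta>"
  unfolding jprob_def by (rule prod.cong) auto

lemma jprob_upd_notin: "i \<notin> W \<Longrightarrow> jprob W (d(i := q)) \<theta> = jprob W d \<theta>"
  by (rule jprob_cong) auto

lemma sum_jprob_upd_mixture:
  assumes W: "finite W" "i \<in> W" and Ai: "finite (A i)"
  shows "(\<Sum>\<theta>\<in>PiE W A. jprob W (d(i := q)) \<theta> * Y \<theta>) =
     (\<Sum>a\<in>A i. pmf q a * (\<Sum>\<theta>\<in>PiE W A. jprob W (d(i := return_pmf a)) \<theta> * Y \<theta>))"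
proof -
  define R where "R \<theta> = (\<Prod>j\<in>W - {i}. pmf (d j) (\<theta> j))" for \<theta>
  have mixed: "jprob W (d(i := q)) \<theta> = pmf q (\<theta> i) * R \<theta>" for \<theta>
    unfolding jprob_def R_def using W by (subst prod.remove[of W i]) (auto intro!: prod.cong)
  have pure: "jprob W (d(i := return_pmf a)) \<theta> = (if a = \<theta> i then R \<theta> else 0)" for \<theta> a
    unfolding jprob_def R_def using W
    by (subst prod.remove[of W i]) (auto intro!: prod.cong simp: indicator_def)
  have "(\<Sum>a\<in>A i. pmf q a * (\<Sum>\<theta>\<in>PiE W A. jprob W (d(i := return_pmf a)) \<theta> * Y \<theta>)) =
        (\<Sum>\<theta>\<in>PiE W A. \<Sum>a\<in>A i. if a = \<theta> i then pmf q a * R \<theta> * Y \<theta> else 0)"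
    unfolding pure sum_distrib_left by (subst sum.swap) (auto intro!: sum.cong)
  also have "\<dots> = (\<Sum>\<theta>\<in>PiE W A. pmf q (\<theta> i) * R \<theta> * Y \<theta>)"
    using Ai W by (intro sum.cong refl) (auto simp: PiE_iff)
  finally show ?thesis
    unfolding mixed by simp
qed

lemma sum_jprob_upd_le:
  assumes "finite W" "i \<in> W" "finite (A i)" "set_pmf q \<subseteq> A i"
    and pure: "\<And>a. a \<in> A i \<Longrightarrow> (\<Sum>\<theta>\<in>PiE W A. jprob W (d(i := return_pmf a)) \<theta> * Y \<theta>) \<le> c"
  shows "(\<Sum>\<theta>\<in>PiE W A. jprob W (d(i := q)) \<theta> * Y \<theta>) \<le> c"
proof -
  have "(\<Sum>\<theta>\<in>PiE W A. jprob W (d(i := q)) \<theta> * Y \<theta>) =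
     (\<Sum>a\<in>A i. pmf q a * (\<Sum>\<theta>\<in>PiE W A. jprob W (d(i := return_pmf a)) \<theta> * Y \<theta>))"
    using assms by (intro sum_jprob_upd_mixture)
  also have "\<dots> \<le> (\<Sum>a\<in>A i. pmf q a * c)"
    using pure by (intro sum_mono mult_left_mono) auto
  also have "\<dots> = c"
    using assms by (simp add: sum_distrib_right[symmetric] sum_pmf_eq_1)
  finally show ?thesis .
qed

lemma gen_trans_nonzero_dest:
  assumes "y \<in> mc_states k S F" "gen_trans k P A \<delta> \<gamma> F outf (v, s, n) y \<noteq> 0"
  shows "n < F \<and> y = (fst y, pgamma k \<gamma> s v, n + 1)"
  using assms by (cases y) (auto simp: gen_trans_def mc_states_def split: if_splits)

lemma mc_reach_target: "x \<in> T \<Longrightarrow> mc_reach X M T m x = 1"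
  by (cases m) auto

lemma sum_gen_trans_cong:
  fixes v :: 'v and f g :: "('v, 's) mcstate \<Rightarrow> real"
  assumes "\<And>v'. n < F \<Longrightarrow> f (v', pgamma k \<gamma> s v, n + 1) = g (v', pgamma k \<gamma> s v, n + 1)"
  shows "(\<Sum>y\<in>mc_states k S F. gen_trans k P A \<delta> \<gamma> F outf (v, s, n) y * f y)
       = (\<Sum>y\<in>mc_states k S F. gen_trans k P A \<delta> \<gamma> F outf (v, s, n) y * g y)"
proof (rule sum.cong[OF refl])
  fix y :: "('v, 's) mcstate"
  assume y: "y \<in> mc_states k S F"
  show "gen_trans k P A \<delta> \<gamma> F outf (v, s, n) y * f y = gen_trans k P A \<delta> \<gamma> F outf (v, s, n) y * g y"
  proof (cases "gen_trans k P A \<delta> \<gamma> F outf (v, s, n) y = 0")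
    case False
    with gen_trans_nonzero_dest[OF y] assms show ?thesis
      by metis
  qed simp
qed

text \<open>The counter of \<open>\<G> \<times> \<pi>\<close> increases along every transition and stops at \<open>F\<close>, so
  from counter \<open>n\<close> at most \<open>F - n\<close> steps matter.\<close>

lemma mc_reach_Suc_stable:
  assumes "F - n \<le> m"
  shows "mc_reach (mc_states k S F) (gen_trans k P A \<delta> \<gamma> F outf) T (Suc m) (v, s, n)
       = mc_reach (mc_states k S F) (gen_trans k P A \<delta> \<gamma> F outf) T m (v, s, n)"
  using assms
proof (induction m arbitrary: v s n)
  case 0
  then show ?case
    by (auto intro!: sum.neutral dest: gen_trans_nonzero_dest)
next
  case (Suc m)
  then show ?case
    by (simp cong: sum_gen_trans_cong)
qed

lemma mc_reach_out_mod_later: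
  assumes "n0 < n"
  shows "mc_reach (mc_states k S F) (gen_trans k P A \<delta> \<gamma> F (out_mod Out i a (v0, s0, n0))) T m (v, s, n)
       = mc_reach (mc_states k S F) (gen_trans k P A \<delta> \<gamma> F (out_pi Out)) T m (v, s, n)"
  using assms
proof (induction m arbitrary: v s n)
  case (Suc m)
  then have "out_mod Out i a (v0, s0, n0) (v, s, n) = out_pi Out (v, s, n)"
    by (auto simp: out_mod_def)
  then have "gen_trans k P A \<delta> \<gamma> F (out_mod Out i a (v0, s0, n0)) (v, s, n)
           = gen_trans k P A \<delta> \<gamma> F (out_pi Out) (v, s, n)"
    unfolding gen_trans_def by (simp only:)
  moreover have "(\<Sum>y\<in>mc_states k S F. gen_trans k P A \<delta> \<gamma> F (out_pi Out) (v, s, n) y *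
        mc_reach (mc_states k S F) (gen_trans k P A \<delta> \<gamma> F (out_mod Out i a (v0, s0, n0))) T m y)
    = (\<Sum>y\<in>mc_states k S F. gen_trans k P A \<delta> \<gamma> F (out_pi Out) (v, s, n) y *
        mc_reach (mc_states k S F) (gen_trans k P A \<delta> \<gamma> F (out_pi Out)) T m y)"
    using Suc by (intro sum_gen_trans_cong) simp
  ultimately show ?case
    by simp
qed simp

lemma reachv_visited: "set h \<inter> G i \<noteq> {} \<Longrightarrow> reachv P A \<delta> G \<sigma> i h m = 1"
  by (cases m) auto

lemma is_history_snocD:
  assumes "is_history P A \<delta> v0 F (h @ [v])" "h \<noteq> []"
  shows "is_history P A \<delta> v0 F h"
    and "\<exists>\<theta>\<in>PiE (P (last h)) A. \<delta> (last h) \<theta> v > 0"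
proof -
  show "is_history P A \<delta> v0 F h"
    unfolding is_history_def
  proof (intro conjI allI impI)
    fix j
    assume "j + 1 < length h"
    with assms(1) show "\<exists>\<theta>\<in>PiE (P (h ! j)) A. \<delta> (h ! j) \<theta> (h ! (j + 1)) > 0"
      by (auto simp: is_history_def nth_append elim!: allE[of _ j])
  qed (use assms in \<open>auto simp: is_history_def\<close>)
  have "length h - 1 + 1 < length (h @ [v])"
    using assms(2) by simp
  with assms(1) have "\<exists>\<theta>\<in>PiE (P ((h @ [v]) ! (length h - 1))) A.
      \<delta> ((h @ [v]) ! (length h - 1)) \<theta> ((h @ [v]) ! (length h - 1 + 1)) > 0"
    unfolding is_history_def by blast
  moreover have "(h @ [v]) ! (length h - 1) = last h" "(h @ [v]) ! (length h - 1 + 1) = v"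
    using assms(2) by (simp_all add: nth_append last_conv_nth)
  ultimately show "\<exists>\<theta>\<in>PiE (P (last h)) A. \<delta> (last h) \<theta> v > 0"
    by simp
qed

locale transducer_chain =
  fixes k :: nat
    and P :: "'v::finite \<Rightarrow> nat set"
    and A :: "nat \<Rightarrow> 'a set"
    and \<delta> :: "'v \<Rightarrow> (nat \<Rightarrow> 'a) \<Rightarrow> 'v \<Rightarrow> real"
    and S :: "nat \<Rightarrow> 's set"
    and s0 :: "nat \<Rightarrow> 's"
    and \<gamma> :: "nat \<Rightarrow> 's \<Rightarrow> 'v \<Rightarrow> 's"
    and Out :: "nat \<Rightarrow> 's \<Rightarrow> 'v \<Rightarrow> 'a pmf"
    and F :: nat
  assumes transducers: "transducers k A S s0 \<gamma> Out"
    and agents: "\<And>v. P v \<subseteq> {1..k}"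
    and actions_finite: "\<And>i. i \<in> {1..k} \<Longrightarrow> finite (A i)"
    and \<delta>_nonneg: "\<And>v \<theta> v'. \<theta> \<in> PiE (P v) A \<Longrightarrow> 0 \<le> \<delta> v \<theta> v'"
begin

abbreviation chain_reach ::
    "(('v, 's) mcstate \<Rightarrow> nat \<Rightarrow> 'a pmf) \<Rightarrow> ('v, 's) mcstate set \<Rightarrow> ('v, 's) mcstate \<Rightarrow> real" where
  "chain_reach outf T x \<equiv> reach_prob k S F (gen_trans k P A \<delta> \<gamma> F outf) T x"

abbreviation succ_reach ::
    "(('v, 's) mcstate \<Rightarrow> nat \<Rightarrow> 'a pmf) \<Rightarrow> ('v, 's) mcstate set \<Rightarrow> 'v \<Rightarrow> (nat \<Rightarrow> 's) \<Rightarrow> nat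
      \<Rightarrow> (nat \<Rightarrow> 'a) \<Rightarrow> real" where
  "succ_reach outf T v s n \<theta> \<equiv> (\<Sum>v'\<in>UNIV. \<delta> v \<theta> v' * chain_reach outf T (v', pgamma k \<gamma> s v, n + 1))"

definition prod_state :: "'v list \<Rightarrow> nat \<Rightarrow> 's" where
  "prod_state u = foldl (pgamma k \<gamma>) (restrict s0 {1..k}) u"

definition hist_state :: "'v list \<Rightarrow> ('v, 's) mcstate" where
  "hist_state h = (last h, prod_state (butlast h), length h)"

lemma prod_state_snoc: "prod_state (u @ [v]) = pgamma k \<gamma> (prod_state u) v"
  by (simp add: prod_state_def)

lemma prod_state_nth: "j \<in> {1..k} \<Longrightarrow> prod_state u j = foldl (\<gamma> j) (s0 j) u"
  by (induction u rule: rev_induct) (auto simp: prod_state_def pgamma_def)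

lemma pgamma_PiE: "s \<in> PiE {1..k} S \<Longrightarrow> pgamma k \<gamma> s v \<in> PiE {1..k} S"
  using transducers by (auto simp: pgamma_def transducers_def PiE_iff)

lemma prod_state_PiE: "prod_state u \<in> PiE {1..k} S"
proof (induction u rule: rev_induct)
  case Nil
  then show ?case
    using transducers by (auto simp: prod_state_def transducers_def)
next
  case (snoc v u)
  then show ?case
    unfolding prod_state_snoc by (rule pgamma_PiE)
qed

lemma hist_state_snoc:
  assumes "hist_state h = (v, s, n)" "h \<noteq> []"
  shows "hist_state (h @ [v']) = (v', pgamma k \<gamma> s v, n + 1)"
proof -
  have "prod_state h = pgamma k \<gamma> (prod_state (butlast h)) (last h)"
    using prod_state_snoc[of "butlast h" "last h"] assms(2) by simp
  with assms show ?thesis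
    by (auto simp: hist_state_def)
qed

lemma hist_state_mc_states: "h \<noteq> [] \<Longrightarrow> length h \<le> F \<Longrightarrow> hist_state h \<in> mc_states k S F"
  using prod_state_PiE by (auto simp: hist_state_def mc_states_def Suc_le_eq)

lemma tstrat_eq_out_pi: "j \<in> {1..k} \<Longrightarrow> tstrat s0 \<gamma> Out j h = out_pi Out (hist_state h) j"
  by (simp add: tstrat_def out_pi_def hist_state_def prod_state_nth)

lemma hist_state_Rset:
  assumes "is_history P A \<delta> v0 F h" "set h \<inter> G i = {}"
  shows "hist_state h \<in> Rset k P A \<delta> G s0 \<gamma> v0 i"
  using assms
proof (induction h rule: rev_induct)
  case (snoc v h)
  show ?case
  proof (cases "h = []")
    case True
    with snoc.prems Rset.base[where G = G and i = i] show ?thesis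
      by (auto simp: is_history_def hist_state_def prod_state_def)
  next
    case False
    from snoc is_history_snocD(1)[OF snoc.prems(1) False]
    have IH: "hist_state h \<in> Rset k P A \<delta> G s0 \<gamma> v0 i"
      by simp
    from is_history_snocD(2)[OF snoc.prems(1) False]
    obtain \<theta> where "\<theta> \<in> PiE (P (last h)) A" "\<delta> (last h) \<theta> v > 0"
      by blast
    from Rset.step[where P = P and \<delta> = \<delta> and G = G and i = i, OF IH[unfolded hist_state_def] this]
      snoc.prems(2) show ?thesis
      by (simp add: hist_state_snoc[OF hist_state_def False])
  qed
qed (simp add: is_history_def)

lemma chain_reach_horizon: "(v, s, F) \<notin> T \<Longrightarrow> chain_reach outf T (v, s, F) = 0"
  by (cases F) (auto simp: reach_prob_def intro!: sum.neutral dest: gen_trans_nonzero_dest)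

lemma chain_reach_hist_state_horizon:
  assumes "w \<noteq> []" "set w \<inter> G i = {}" "length (pre @ w) = F"
  shows "chain_reach outf (goal_states G i) (hist_state (pre @ w)) = 0"
proof -
  have "chain_reach outf (goal_states G i) (last w, prod_state (butlast (pre @ w)), F) = 0"
    using assms by (intro chain_reach_horizon) (auto simp: goal_states_def dest: last_in_set)
  with assms show ?thesis
    by (simp add: hist_state_def)
qed

lemma finite_mc_states: "finite (mc_states k S F :: ('v, 's) mcstate set)"
  unfolding mc_states_def using transducers
  by (intro finite_cartesian_product finite_PiE) (auto simp: transducers_def)

lemma chain_reach_unfold:
  assumes s: "s \<in> PiE {1..k} S" and n: "n < F" and nT: "(v, s, n) \<notin> T"
  shows "chain_reach outf T (v, s, n) =
    (\<Sum>\<theta>\<in>PiE (P v) A. jprob (P v) (outf (v, s, n)) \<theta> * succ_reach outf T v s n \<theta>)"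
proof -
  obtain F' where F: "F = Suc F'"
    using n by (cases F) auto
  define X where "X = (mc_states k S F :: ('v, 's) mcstate set)"
  define M where "M = gen_trans k P A \<delta> \<gamma> F outf"
  define s' where "s' = pgamma k \<gamma> s v"
  define x where "x = (v, s, n)"
  have "finite X"
    by (simp add: X_def finite_mc_states)
  moreover have "range (\<lambda>v'. (v', s', n + 1)) \<subseteq> X"
    using pgamma_PiE[OF s] n by (auto simp: X_def mc_states_def s'_def)
  ultimately have "(\<Sum>y\<in>X. M x y * mc_reach X M T F' y)
      = (\<Sum>y\<in>range (\<lambda>v'. (v', s', n + 1)). M x y * mc_reach X M T F' y)"
    by (intro sum.mono_neutral_right) (auto simp: X_def M_def x_def s'_def dest: gen_trans_nonzero_dest)
  also have "\<dots> = (\<Sum>v'\<in>UNIV. M x (v', s', n + 1) * mc_reach X M T F' (v', s', n + 1))"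
    by (subst sum.reindex) (auto simp: inj_on_def)
  also have "\<dots> = (\<Sum>v'\<in>UNIV. M x (v', s', n + 1) * mc_reach X M T F (v', s', n + 1))"
  proof -
    have "mc_reach X M T F (v', s', n + 1) = mc_reach X M T F' (v', s', n + 1)" for v'
      unfolding X_def M_def F by (rule mc_reach_Suc_stable) simp
    then show ?thesis
      by simp
  qed
  also have "\<dots> = (\<Sum>v'\<in>UNIV. pv P A \<delta> (outf x) v v' * mc_reach X M T F (v', s', n + 1))"
    using n by (simp add: M_def x_def s'_def gen_trans_def)
  also have "\<dots> = (\<Sum>\<theta>\<in>PiE (P v) A. jprob (P v) (outf x) \<theta> *
      (\<Sum>v'\<in>UNIV. \<delta> v \<theta> v' * mc_reach X M T F (v', s', n + 1)))"
    unfolding pv_def sum_distrib_right sum_distrib_left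
    by (subst sum.swap) (simp add: mult.assoc)
  finally show ?thesis
    using nT by (simp add: reach_prob_def F X_def M_def x_def s'_def)
qed

text \<open>Switching agent \<open>i\<close> to a pure action at \<open>(v, s, n)\<close> only changes the first step
  from there, since the chain never returns to counter value \<open>n\<close>.\<close>

lemma chain_reach_out_mod_unfold:
  assumes s: "s \<in> PiE {1..k} S" and n: "n < F" and nT: "(v, s, n) \<notin> T"
  shows "chain_reach (out_mod Out i a (v, s, n)) T (v, s, n) =
    (\<Sum>\<theta>\<in>PiE (P v) A. jprob (P v) ((out_pi Out (v, s, n))(i := return_pmf a)) \<theta> *
       succ_reach (out_pi Out) T v s n \<theta>)"
  using chain_reach_unfold[OF assms, of "out_mod Out i a (v, s, n)"]
  by (simp add: out_mod_def reach_prob_def mc_reach_out_mod_later)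

lemma reachv_Suc_eq_succ_reach:
  assumes "set w \<inter> G i = {}"
    and succ: "\<And>v'. v' \<notin> G i \<Longrightarrow>
        reachv P A \<delta> G \<sigma> i (w @ [v']) m = chain_reach outf (goal_states G i) (v', pgamma k \<gamma> s (last w), n + 1)"
  shows "reachv P A \<delta> G \<sigma> i w (Suc m)
       = (\<Sum>\<theta>\<in>PiE (P (last w)) A. jprob (P (last w)) (\<lambda>j. \<sigma> j w) \<theta> *
            succ_reach outf (goal_states G i) (last w) s n \<theta>)"
proof -
  have "reachv P A \<delta> G \<sigma> i (w @ [v']) m = chain_reach outf (goal_states G i) (v', pgamma k \<gamma> s (last w), n + 1)"
    for v'
    using succ by (cases "v' \<in> G i") (simp_all add: reachv_visited reach_prob_def mc_reach_target goal_states_def)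
  with assms(1) show ?thesis
    by simp
qed

lemma reachv_Suc_le_succ_reach:
  assumes "set w \<inter> G i = {}"
    and succ: "\<And>\<theta> v'. \<theta> \<in> PiE (P (last w)) A \<Longrightarrow> 0 < \<delta> (last w) \<theta> v' \<Longrightarrow> v' \<notin> G i \<Longrightarrow>
        reachv P A \<delta> G \<sigma> i (w @ [v']) m \<le> chain_reach outf (goal_states G i) (v', pgamma k \<gamma> s (last w), n + 1)"
  shows "reachv P A \<delta> G \<sigma> i w (Suc m)
       \<le> (\<Sum>\<theta>\<in>PiE (P (last w)) A. jprob (P (last w)) (\<lambda>j. \<sigma> j w) \<theta> *
            succ_reach outf (goal_states G i) (last w) s n \<theta>)"
proof -
  have "\<delta> (last w) \<theta> v' * reachv P A \<delta> G \<sigma> i (w @ [v']) m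
      \<le> \<delta> (last w) \<theta> v' * chain_reach outf (goal_states G i) (v', pgamma k \<gamma> s (last w), n + 1)"
    if \<theta>: "\<theta> \<in> PiE (P (last w)) A" for \<theta> v'
  proof (cases "v' \<in> G i \<or> \<delta> (last w) \<theta> v' = 0")
    case True
    then show ?thesis
      by (auto simp: reachv_visited reach_prob_def mc_reach_target goal_states_def)
  next
    case False
    with \<delta>_nonneg[OF \<theta>, of v'] succ[OF \<theta>] show ?thesis
      by (intro mult_left_mono) auto
  qed
  with assms(1) show ?thesis
    by (auto intro!: sum_mono mult_left_mono[OF _ jprob_nonneg])
qed

lemma reachv_tstrat_eq_chain_reach:
  assumes "w \<noteq> []" "set w \<inter> G i = {}" "length (pre @ w) + m = F"
  shows "reachv P A \<delta> G (\<lambda>j w'. tstrat s0 \<gamma> Out j (pre @ w')) i w m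
       = chain_reach (out_pi Out) (goal_states G i) (hist_state (pre @ w))"
  using assms
proof (induction m arbitrary: w)
  case 0
  then show ?case
    by (simp add: chain_reach_hist_state_horizon)
next
  case (Suc m)
  define \<sigma> where "\<sigma> = (\<lambda>j w'. tstrat s0 \<gamma> Out j (pre @ w'))"
  obtain v s n where x: "hist_state (pre @ w) = (v, s, n)"
    by (cases "hist_state (pre @ w)")
  have v: "v = last w" and s: "s = prod_state (butlast (pre @ w))" and n: "n = length (pre @ w)"
    using x Suc.prems(1) by (auto simp: hist_state_def)
  have nT: "(v, s, n) \<notin> goal_states G i"
    using Suc.prems(1,2) by (auto simp: v goal_states_def dest: last_in_set)
  have out: "jprob (P v) (\<lambda>j. \<sigma> j w) \<theta> = jprob (P v) (out_pi Out (v, s, n)) \<theta>" for \<theta>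
  proof (rule jprob_cong)
    fix j
    assume "j \<in> P v"
    with agents have "j \<in> {1..k}"
      by blast
    from tstrat_eq_out_pi[OF this, of "pre @ w"] show "\<sigma> j w = out_pi Out (v, s, n) j"
      by (simp add: \<sigma>_def x)
  qed
  have "reachv P A \<delta> G \<sigma> i w (Suc m)
      = (\<Sum>\<theta>\<in>PiE (P v) A. jprob (P v) (\<lambda>j. \<sigma> j w) \<theta> * succ_reach (out_pi Out) (goal_states G i) v s n \<theta>)"
    unfolding v
  proof (rule reachv_Suc_eq_succ_reach[where G = G and i = i, OF Suc.prems(2)])
    fix v'
    assume "v' \<notin> G i"
    with Suc.prems Suc.IH[of "w @ [v']"] hist_state_snoc[OF x]
    show "reachv P A \<delta> G \<sigma> i (w @ [v']) m
        = chain_reach (out_pi Out) (goal_states G i) (v', pgamma k \<gamma> s (last w), n + 1)"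
      by (simp add: \<sigma>_def v)
  qed
  also have "\<dots> = chain_reach (out_pi Out) (goal_states G i) (v, s, n)"
    unfolding out using Suc.prems prod_state_PiE
    by (intro chain_reach_unfold[symmetric] nT) (auto simp: s n)
  finally show ?case
    by (simp add: \<sigma>_def x)
qed

lemma mixed_switch_no_gain:
  assumes no_gain: "\<And>a. i \<in> P v \<Longrightarrow> a \<in> A i \<Longrightarrow>
      chain_reach (out_mod Out i a (v, s, n)) T (v, s, n) \<le> chain_reach (out_pi Out) T (v, s, n)"
    and i: "i \<in> {1..k}" and q: "set_pmf q \<subseteq> A i"
    and s: "s \<in> PiE {1..k} S" and n: "n < F" and nT: "(v, s, n) \<notin> T"
  shows "(\<Sum>\<theta>\<in>PiE (P v) A. jprob (P v) ((out_pi Out (v, s, n))(i := q)) \<theta> *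
       succ_reach (out_pi Out) T v s n \<theta>) \<le> chain_reach (out_pi Out) T (v, s, n)"
proof (cases "i \<in> P v")
  case True
  have "finite (P v)"
    using agents by (meson finite_atLeastAtMost finite_subset)
  then show ?thesis
  proof (rule sum_jprob_upd_le[where A = A and i = i, OF _ True actions_finite[OF i] q])
    fix a
    assume "a \<in> A i"
    then show "(\<Sum>\<theta>\<in>PiE (P v) A. jprob (P v) ((out_pi Out (v, s, n))(i := return_pmf a)) \<theta> *
        succ_reach (out_pi Out) T v s n \<theta>) \<le> chain_reach (out_pi Out) T (v, s, n)"
      unfolding chain_reach_out_mod_unfold[OF s n nT, symmetric] by (rule no_gain[OF True])
  qed
next
  case False
  then show ?thesis
    by (simp add: jprob_upd_notin chain_reach_unfold[OF s n nT])
qed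

lemma reachv_deviation_le_chain_reach:
  assumes no_gain: "\<And>v s n a. (v, s, n) \<in> mc_states k S F \<Longrightarrow> (v, s, n) \<in> Rset k P A \<delta> G s0 \<gamma> v0 i \<Longrightarrow>
        i \<in> P v \<Longrightarrow> a \<in> A i \<Longrightarrow> chain_reach (out_mod Out i a (v, s, n)) (goal_states G i) (v, s, n)
          \<le> chain_reach (out_pi Out) (goal_states G i) (v, s, n)"
    and i: "i \<in> {1..k}" and \<tau>: "is_strategy A i \<tau>"
    and "w \<noteq> []" "set w \<inter> G i = {}" "length (pre @ w) + m = F"
    and "hist_state (pre @ w) \<in> Rset k P A \<delta> G s0 \<gamma> v0 i"
  shows "reachv P A \<delta> G ((\<lambda>j w'. tstrat s0 \<gamma> Out j (pre @ w'))(i := \<tau>)) i w m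
       \<le> chain_reach (out_pi Out) (goal_states G i) (hist_state (pre @ w))"
  using assms(4-)
proof (induction m arbitrary: w)
  case 0
  then show ?case
    by (simp add: chain_reach_hist_state_horizon)
next
  case (Suc m)
  define \<rho> where "\<rho> = (\<lambda>j w'. tstrat s0 \<gamma> Out j (pre @ w'))(i := \<tau>)"
  define T where "T = (goal_states G i :: ('v, 's) mcstate set)"
  obtain v s n where x: "hist_state (pre @ w) = (v, s, n)"
    by (cases "hist_state (pre @ w)")
  have v: "v = last w" and s: "s = prod_state (butlast (pre @ w))" and n: "n = length (pre @ w)"
    using x Suc.prems(1) by (auto simp: hist_state_def)
  have nT: "(v, s, n) \<notin> T"
    using Suc.prems(1,2) by (auto simp: v T_def goal_states_def dest: last_in_set)
  have sS: "s \<in> PiE {1..k} S" and nF: "n < F"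
    using prod_state_PiE Suc.prems(3) by (auto simp: s n)
  have out: "jprob (P v) (\<lambda>j. \<rho> j w) \<theta> = jprob (P v) ((out_pi Out (v, s, n))(i := \<tau> w)) \<theta>" for \<theta>
  proof (rule jprob_cong)
    fix j
    assume "j \<in> P v"
    with agents have "j \<in> {1..k}"
      by blast
    from tstrat_eq_out_pi[OF this, of "pre @ w"] show "\<rho> j w = ((out_pi Out (v, s, n))(i := \<tau> w)) j"
      by (simp add: \<rho>_def x)
  qed
  have "reachv P A \<delta> G \<rho> i w (Suc m)
      \<le> (\<Sum>\<theta>\<in>PiE (P v) A. jprob (P v) (\<lambda>j. \<rho> j w) \<theta> * succ_reach (out_pi Out) T v s n \<theta>)"
    unfolding v T_def
  proof (rule reachv_Suc_le_succ_reach[where G = G and i = i, OF Suc.prems(2)])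
    fix \<theta> v'
    assume step: "\<theta> \<in> PiE (P (last w)) A" "0 < \<delta> (last w) \<theta> v'" "v' \<notin> G i"
    from Rset.step[where P = P and \<delta> = \<delta> and G = G and i = i, OF Suc.prems(4)[unfolded x v] step]
    have "hist_state (pre @ w @ [v']) \<in> Rset k P A \<delta> G s0 \<gamma> v0 i"
      using Suc.prems(1) hist_state_snoc[OF x] by (simp add: v)
    then have "reachv P A \<delta> G \<rho> i (w @ [v']) m
        \<le> chain_reach (out_pi Out) (goal_states G i) (hist_state (pre @ w @ [v']))"
      using Suc.prems step(3) unfolding \<rho>_def by (intro Suc.IH) auto
    with Suc.prems(1) hist_state_snoc[OF x]
    show "reachv P A \<delta> G \<rho> i (w @ [v']) m
        \<le> chain_reach (out_pi Out) (goal_states G i) (v', pgamma k \<gamma> s (last w), n + 1)"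
      by (simp add: v)
  qed
  also have "\<dots> = (\<Sum>\<theta>\<in>PiE (P v) A. jprob (P v) ((out_pi Out (v, s, n))(i := \<tau> w)) \<theta> *
      succ_reach (out_pi Out) T v s n \<theta>)"
    by (simp only: out)
  also have "\<dots> \<le> chain_reach (out_pi Out) T (v, s, n)"
  proof (rule mixed_switch_no_gain[OF _ i _ sS nF nT])
    show "set_pmf (\<tau> w) \<subseteq> A i"
      using \<tau> by (simp add: is_strategy_def)
    show "chain_reach (out_mod Out i a (v, s, n)) T (v, s, n) \<le> chain_reach (out_pi Out) T (v, s, n)"
      if "i \<in> P v" "a \<in> A i" for a
      using no_gain[of v s n a] that Suc.prems hist_state_mc_states[of "pre @ w"] x
      by (auto simp: T_def)
  qed
  finally show ?case
    unfolding \<rho>_def T_def x .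
qed

end

theorem mainTheorem5:
  fixes b k L F :: nat
    and v0 :: "'v::finite"
    and A :: "nat \<Rightarrow> 'a set"
    and P :: "'v \<Rightarrow> nat set"
    and \<delta> :: "'v \<Rightarrow> (nat \<Rightarrow> 'a) \<Rightarrow> 'v \<Rightarrow> real"
    and G :: "nat \<Rightarrow> 'v set"
    and S :: "nat \<Rightarrow> 's set"
    and s0 :: "nat \<Rightarrow> 's"
    and \<gamma> :: "nat \<Rightarrow> 's \<Rightarrow> 'v \<Rightarrow> 's"
    and Out :: "nat \<Rightarrow> 's \<Rightarrow> 'v \<Rightarrow> 'a pmf"
  assumes game: "bounded_cgs b k A P \<delta> L"
    and trans: "transducers k A S s0 \<gamma> Out"
    and notSPE: "\<not> is_SPE k P A \<delta> G v0 F (tstrat s0 \<gamma> Out)"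
  shows "\<exists>i\<in>{1..k}. \<exists>v s n. (v, s, n) \<in> mc_states k S F \<and> i \<in> P v \<and>
           (\<exists>a\<in>A i.
              (v, s, n) \<in> Rset k P A \<delta> G s0 \<gamma> v0 i \<and>
              reach_prob k S F (gen_trans k P A \<delta> \<gamma> F (out_mod Out i a (v, s, n)))
                  (goal_states G i) (v, s, n)
              > reach_prob k S F (gen_trans k P A \<delta> \<gamma> F (out_pi Out))
                  (goal_states G i) (v, s, n))"
proof (rule ccontr)
  assume no_switch: "\<not> ?thesis"
  interpret transducer_chain k P A \<delta> S s0 \<gamma> Out F
    using game trans by unfold_locales (auto simp: bounded_cgs_def)
  from notSPE obtain h i \<tau> where hist: "is_history P A \<delta> v0 F h" and i: "i \<in> {1..k}"
    and \<tau>: "is_strategy A i \<tau>"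
    and gain: "subval P A \<delta> G F h (substrat (tstrat s0 \<gamma> Out) h) i
             < subval P A \<delta> G F h ((substrat (tstrat s0 \<gamma> Out) h)(i := \<tau>)) i"
    by (auto simp: is_SPE_def is_NE_sub_def not_le)
  then have hG: "set h \<inter> G i = {}"
    by (auto simp: subval_def split: if_splits)
  have h: "h \<noteq> []" "length h \<le> F"
    using hist by (auto simp: is_history_def)
  have w: "[last h] \<noteq> []" "set [last h] \<inter> G i = {}" "length (butlast h @ [last h]) + (F - length h) = F"
    using h hG by (auto dest: last_in_set)
  have no_gain: "\<And>v s n a. (v, s, n) \<in> mc_states k S F \<Longrightarrow> (v, s, n) \<in> Rset k P A \<delta> G s0 \<gamma> v0 i \<Longrightarrow>
      i \<in> P v \<Longrightarrow> a \<in> A i \<Longrightarrow> chain_reach (out_mod Out i a (v, s, n)) (goal_states G i) (v, s, n)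
        \<le> chain_reach (out_pi Out) (goal_states G i) (v, s, n)"
    using no_switch i not_less by blast
  have "subval P A \<delta> G F h ((substrat (tstrat s0 \<gamma> Out) h)(i := \<tau>)) i
      \<le> chain_reach (out_pi Out) (goal_states G i) (hist_state (butlast h @ [last h]))"
    using reachv_deviation_le_chain_reach[where G = G, OF no_gain i \<tau> w]
      hist_state_Rset[where G = G and i = i, OF hist hG] h hG
    by (simp add: subval_def substrat_def)
  also have "\<dots> = subval P A \<delta> G F h (substrat (tstrat s0 \<gamma> Out) h) i"
    using reachv_tstrat_eq_chain_reach[where G = G, OF w] h hG
    by (simp add: subval_def substrat_def)
  finally show False
    using gain by simp
qed

end
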